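(* Let $(A,\mathfrak m)$ be a local ring, $B$ a ring, $f : A \to B$ a ring homomorphism and $J$ a proper ideal of $B$ with $J \subseteq \mathrm{Rad}(B)$. Assume that $J \subseteq f(A)$ and $f(\mathrm{Reg}(A)) = \mathrm{Reg}(B)$. Then $A \bowtie^f J$ is a Prüfer ring if and only if $A$ is a Prüfer ring and $J = f(a)J$ for all $a \in \mathfrak m \setminus Z(A)$.
   Context: All rings are commutative with identity. For a ring homomorphism $f:A\to B$ and an ideal $J$ of $B$, $A \bowtie^f J := \{(a, f(a)+j) : a \in A, j \in J\}$, a subring of $A\times B$. $Z(R)$ is the set of zero-divisors of $R$, $\mathrm{Reg}(R)=R\setminus Z(R)$ the set of regular elements, and $\mathrm{Rad}(B)$ the Jacobson radical of $B$. An ideal is regular if it contains a regular element. A ring $R$ is a Prüfer ring if every finitely generated regular ideal of $R$ is invertible. *)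

theory Defs
  imports "HOL-Algebra.Algebra"
begin

definition zero_divisors :: "('a, 'b) ring_scheme \<Rightarrow> 'a set" where
  "zero_divisors R = {a \<in> carrier R. \<exists>b \<in> carrier R. b \<noteq> \<zero>\<^bsub>R\<^esub> \<and> a \<otimes>\<^bsub>R\<^esub> b = \<zero>\<^bsub>R\<^esub>}"

definition regular_elems :: "('a, 'b) ring_scheme \<Rightarrow> 'a set" where
  "regular_elems R = carrier R - zero_divisors R"

definition jacobson_rad :: "('a, 'b) ring_scheme \<Rightarrow> 'a set" where
  "jacobson_rad R = carrier R \<inter> \<Inter> {M. maximalideal M R}"

definition local_ring :: "('a, 'b) ring_scheme \<Rightarrow> bool" where
  "local_ring R \<longleftrightarrow> cring R \<and> (\<exists>!M. maximalideal M R)"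

definition regular_ideal :: "('a, 'b) ring_scheme \<Rightarrow> 'a set \<Rightarrow> bool" where
  "regular_ideal R I \<longleftrightarrow> ideal I R \<and> I \<inter> regular_elems R \<noteq> {}"

definition fin_gen_ideal :: "('a, 'b) ring_scheme \<Rightarrow> 'a set \<Rightarrow> bool" where
  "fin_gen_ideal R I \<longleftrightarrow> ideal I R \<and> (\<exists>S. finite S \<and> S \<subseteq> carrier R \<and> I = genideal R S)"

text \<open>Invertible ideal: I I^{-1} = R with I^{-1} a fractional ideal in the total ring of
  quotients; written with a common regular denominator s, I^{-1} = s^{-1} J,
  this says I J = s R for an ideal J of R and a regular element s.\<close>
definition invertible_ideal :: "('a, 'b) ring_scheme \<Rightarrow> 'a set \<Rightarrow> bool" where
  "invertible_ideal R I \<longleftrightarrow> ideal I R \<and>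
     (\<exists>J s. ideal J R \<and> s \<in> regular_elems R \<and> ideal_prod R I J = cgenideal R s)"

definition pruefer_ring :: "('a, 'b) ring_scheme \<Rightarrow> bool" where
  "pruefer_ring R \<longleftrightarrow> (\<forall>I. fin_gen_ideal R I \<and> regular_ideal R I \<longrightarrow> invertible_ideal R I)"

definition amalg :: "('a, 'c) ring_scheme \<Rightarrow> ('b, 'd) ring_scheme \<Rightarrow> ('a \<Rightarrow> 'b) \<Rightarrow> 'b set
    \<Rightarrow> ('a \<times> 'b) ring" where
  "amalg A B f J = (RDirProd A B)\<lparr>carrier :=
      {(a, f a \<oplus>\<^bsub>B\<^esub> j) | a j. a \<in> carrier A \<and> j \<in> J}\<rparr>"

end

theory Submission imports Defs begin

(* Both A and A \<bowtie>\<^sup>f J are local: J \<subseteq> f(A) and J \<noteq> B force the preimage of J under f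
   into m, so every (a, f a + j) with a \<notin> m is a unit.  In a local ring an invertible ideal
   is principal with a regular generator, and if it is generated by a set S then already one
   element of S generates it.  The regular elements of A \<bowtie>\<^sup>f J are the pairs with regular
   components, and the projection onto A carries finitely generated, regular and principal
   ideals to ideals of the same kind.

   If A \<bowtie>\<^sup>f J is Pruefer, projecting shows that A is.  For a regular a \<in> m and j \<in> J the
   ideal generated by (a, f a) and (0, j) is then principal, and its generator must be
   (a, f a) because (0, j) is not regular; hence j \<in> f(a)J.

   Conversely, J = f(a)J then holds for every regular a (trivially for units), so a regular
   ideal I of A \<bowtie>\<^sup>f J contains 0 \<times> J.  Hence I = I\<^sub>0 \<bowtie>\<^sup>f J for its projection I\<^sub>0 = uA, and
   this is the ideal generated by the regular element (u, f u). *)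

lemma (in cring) cring_idealI:
  assumes "I \<subseteq> carrier R" "\<zero> \<in> I"
    and "\<And>a b. \<lbrakk>a \<in> I; b \<in> I\<rbrakk> \<Longrightarrow> a \<oplus> b \<in> I"
    and "\<And>a x. \<lbrakk>a \<in> I; x \<in> carrier R\<rbrakk> \<Longrightarrow> x \<otimes> a \<in> I"
  shows "ideal I R"
proof (rule idealI[OF ring_axioms])
  show "subgroup I (add_monoid R)"
  proof (rule add.subgroupI)
    fix a assume a: "a \<in> I"
    then have "\<ominus> a = (\<ominus> \<one>) \<otimes> a" using assms(1) l_minus by auto
    then show "\<ominus> a \<in> I" using assms(4)[OF a, of "\<ominus> \<one>"] by simp
  qed (use assms in auto)
qed (use assms m_comm in \<open>auto simp: subset_iff\<close>)

lemma (in cring) ideal_in_maximalideal: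
  assumes "ideal I R" "\<one> \<notin> I"
  obtains M where "maximalideal M R" "I \<subseteq> M"
proof -
  let ?S = "{K. ideal K R \<and> I \<subseteq> K \<and> \<one> \<notin> K}"
  have "\<exists>M\<in>?S. \<forall>K\<in>?S. M \<subseteq> K \<longrightarrow> K = M"
  proof (rule subset_Zorn_nonempty)
    show "?S \<noteq> {}" using assms by blast
  next
    fix C assume C: "C \<noteq> {}" "subset.chain ?S C"
    have chain: "subset.chain {K. ideal K R} C"
      using C(2) unfolding pred_on.chain_def by blast
    have "ideal (\<Union>C) R"
      using chain_Union_is_ideal[OF chain] C(1) by simp
    then show "\<Union>C \<in> ?S"
      using C unfolding pred_on.chain_def by blast
  qed
  then obtain M where "M \<in> ?S" and M_max: "\<And>K. \<lbrakk>K \<in> ?S; M \<subseteq> K\<rbrakk> \<Longrightarrow> K = M"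
    by auto
  then have M: "ideal M R" "I \<subseteq> M" "\<one> \<notin> M" by auto
  have "maximalideal M R"
  proof (rule maximalidealI)
    show "carrier R \<noteq> M" using M(3) one_closed by blast
    fix K assume "ideal K R" "M \<subseteq> K" "K \<subseteq> carrier R"
    then show "K = M \<or> K = carrier R"
      using M(2) M_max[of K] ideal.one_imp_carrier[of K R] by auto
  qed (rule M(1))
  then show thesis using that M(2) by blast
qed

lemma local_ring_notin_maximalideal_Units:
  fixes R (structure)
  assumes "local_ring R" "maximalideal m R" "a \<in> carrier R" "a \<notin> m"
  shows "a \<in> Units R"
proof (rule ccontr)
  assume a_nonunit: "a \<notin> Units R"
  interpret cring R using assms(1) unfolding local_ring_def by blast
  have "\<one> \<notin> PIdl a"
  proof
    assume "\<one> \<in> PIdl a"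
    then obtain x where x: "x \<in> carrier R" "x \<otimes> a = \<one>" unfolding cgenideal_def by auto
    moreover have "a \<otimes> x = \<one>" using x assms(3) m_comm by simp
    ultimately have "a \<in> Units R" using assms(3) unfolding Units_def by blast
    then show False using a_nonunit by contradiction
  qed
  then obtain M where "maximalideal M R" "PIdl a \<subseteq> M"
    using ideal_in_maximalideal[OF cgenideal_ideal[OF assms(3)]] by blast
  moreover have "M = m" using calculation(1) assms(1,2) unfolding local_ring_def by blast
  ultimately show False using cgenideal_self assms(3,4) by blast
qed

lemma (in cring) regular_elemsI:
  assumes "a \<in> carrier R" "\<And>b. \<lbrakk>b \<in> carrier R; a \<otimes> b = \<zero>\<rbrakk> \<Longrightarrow> b = \<zero>"
  shows "a \<in> regular_elems R"
  using assms unfolding regular_elems_def zero_divisors_def by blast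

lemma (in cring) regular_elemsD:
  assumes "a \<in> regular_elems R" "b \<in> carrier R" "a \<otimes> b = \<zero>"
  shows "b = \<zero>"
  using assms unfolding regular_elems_def zero_divisors_def by blast

lemma (in cring) regular_elems_carrier: "a \<in> regular_elems R \<Longrightarrow> a \<in> carrier R"
  unfolding regular_elems_def by blast

lemma (in cring) regular_elems_cancel:
  assumes "a \<in> regular_elems R" "b \<in> carrier R" "c \<in> carrier R" "a \<otimes> b = a \<otimes> c"
  shows "b = c"
proof -
  have "a \<otimes> (b \<ominus> c) = \<zero>"
    using assms(2-4) regular_elems_carrier[OF assms(1)] by algebra
  then have "b \<ominus> c = \<zero>" using regular_elemsD assms(1-3) by blast
  then show "b = c" using assms(2,3) by (metis a_minus_def add.inv_closed minus_equality add.inv_inv)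
qed

lemma (in cring) regular_elems_mult:
  assumes "a \<in> regular_elems R" "b \<in> regular_elems R"
  shows "a \<otimes> b \<in> regular_elems R"
proof (rule regular_elemsI)
  have ab: "a \<in> carrier R" "b \<in> carrier R" using assms regular_elems_carrier by auto
  then show "a \<otimes> b \<in> carrier R" by simp
  fix c assume c: "c \<in> carrier R" "a \<otimes> b \<otimes> c = \<zero>"
  then have "a \<otimes> (b \<otimes> c) = \<zero>" using ab by (simp add: m_assoc)
  then have "b \<otimes> c = \<zero>" using regular_elemsD[OF assms(1)] ab c(1) by simp
  then show "c = \<zero>" using regular_elemsD[OF assms(2)] c(1) by simp
qed

lemma (in cring) regular_elems_factor:
  assumes "a \<otimes> b \<in> regular_elems R" "a \<in> carrier R" "b \<in> carrier R"
  shows "a \<in> regular_elems R"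
proof (rule regular_elemsI)
  fix c assume c: "c \<in> carrier R" "a \<otimes> c = \<zero>"
  have "a \<otimes> b \<otimes> c = b \<otimes> (a \<otimes> c)" using c(1) assms(2,3) by algebra
  then show "c = \<zero>" using regular_elemsD[OF assms(1) c(1)] c(2) assms(3) by simp
qed (rule assms(2))

lemma (in cring) Units_regular_elems:
  assumes "u \<in> Units R" shows "u \<in> regular_elems R"
proof (rule regular_elemsI)
  fix c assume c: "c \<in> carrier R" "u \<otimes> c = \<zero>"
  have "c = inv u \<otimes> (u \<otimes> c)"
    using c(1) assms by (metis Units_closed Units_inv_closed Units_l_inv l_one m_assoc)
  then show "c = \<zero>" using c(2) assms by simp
qed (use assms in blast)

lemma (in cring) cgenideal_regular_invertible:
  assumes "a \<in> regular_elems R" shows "invertible_ideal R (PIdl a)"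
  unfolding invertible_ideal_def
proof (intro conjI exI)
  show I: "ideal (PIdl a) R" using cgenideal_ideal regular_elems_carrier[OF assms] .
  show "ideal (carrier R) R" by (rule oneideal)
  show "ideal_prod R (PIdl a) (carrier R) = PIdl a" by (rule ideal_prod_one[OF I])
qed (rule assms)

lemma (in cring) cgenideal_Units_mult:
  assumes "u \<in> Units R" "a \<in> carrier R"
  shows "PIdl (u \<otimes> a) = PIdl a"
proof
  have u: "u \<in> carrier R" "inv u \<in> carrier R" using assms(1) by auto
  have "u \<otimes> a \<in> PIdl a" unfolding cgenideal_def using u assms(2) by blast
  then show "PIdl (u \<otimes> a) \<subseteq> PIdl a"
    using cgenideal_minimal cgenideal_ideal assms(2) by blast
  have "a = inv u \<otimes> (u \<otimes> a)" using assms(1,2) u by (simp add: m_assoc[symmetric])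
  then have "a \<in> PIdl (u \<otimes> a)" unfolding cgenideal_def using u by blast
  then show "PIdl a \<subseteq> PIdl (u \<otimes> a)"
    using cgenideal_minimal cgenideal_ideal u(1) assms(2) by blast
qed

lemma (in cring) cgenideal_regular_cancel:
  assumes "y \<in> regular_elems R" "x \<in> carrier R" "z \<in> carrier R" "z \<otimes> y \<in> PIdl (x \<otimes> y)"
  shows "z \<in> PIdl x"
proof -
  obtain w where w: "w \<in> carrier R" "z \<otimes> y = w \<otimes> (x \<otimes> y)"
    using assms(4) unfolding cgenideal_def by blast
  have y: "y \<in> carrier R" using regular_elems_carrier[OF assms(1)] .
  then have "y \<otimes> z = y \<otimes> (w \<otimes> x)" using w assms(2,3) m_comm m_assoc by (metis m_closed)
  then have "z = w \<otimes> x" using regular_elems_cancel[OF assms(1)] assms(2,3) w(1) by simp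
  then show ?thesis unfolding cgenideal_def using w(1) by blast
qed

lemma (in cring) pruefer_ringD:
  assumes "pruefer_ring R" "finite G" "G \<subseteq> carrier R" "a \<in> Idl G" "a \<in> regular_elems R"
  shows "invertible_ideal R (Idl G)"
  using assms genideal_ideal unfolding pruefer_ring_def fin_gen_ideal_def regular_ideal_def by blast

locale local_cring = cring R + N: ideal N R for R (structure) and N +
  assumes one_notin_N: "\<one> \<notin> N"
    and notin_N_Units: "\<lbrakk>a \<in> carrier R; a \<notin> N\<rbrakk> \<Longrightarrow> a \<in> Units R"
begin

lemma zero_notin_regular_elems: "\<zero> \<notin> regular_elems R"
proof
  assume "\<zero> \<in> regular_elems R"
  then have "\<one> = \<zero>" using regular_elemsD[of \<zero> \<one>] by simp
  then show False using one_notin_N N.zero_closed by simp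
qed

lemma ideal_N_mult:
  assumes "g \<in> carrier R" shows "ideal {n \<otimes> g | n. n \<in> N} R"
proof (rule cring_idealI)
  show "{n \<otimes> g | n. n \<in> N} \<subseteq> carrier R" using N.Icarr assms by blast
  have "\<zero> = \<zero> \<otimes> g" using assms by simp
  then show "\<zero> \<in> {n \<otimes> g | n. n \<in> N}" using N.zero_closed by blast
  fix a b assume "a \<in> {n \<otimes> g | n. n \<in> N}" "b \<in> {n \<otimes> g | n. n \<in> N}"
  then obtain n1 n2 where n: "n1 \<in> N" "n2 \<in> N" "a = n1 \<otimes> g" "b = n2 \<otimes> g" by blast
  then have "a \<oplus> b = (n1 \<oplus> n2) \<otimes> g" using N.Icarr assms by (simp add: l_distr)
  then show "a \<oplus> b \<in> {n \<otimes> g | n. n \<in> N}" using N.a_closed[OF n(1,2)] by blast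
next
  fix a x assume "a \<in> {n \<otimes> g | n. n \<in> N}" "x \<in> carrier R"
  then obtain n where n: "n \<in> N" "a = n \<otimes> g" "x \<in> carrier R" by blast
  then have "x \<otimes> a = (x \<otimes> n) \<otimes> g" using N.Icarr assms by (simp add: m_assoc)
  then show "x \<otimes> a \<in> {n \<otimes> g | n. n \<in> N}" using N.I_l_closed[OF n(1,3)] by blast
qed

lemma regular_notin_N_mult:
  assumes "g \<in> regular_elems R" shows "g \<notin> {n \<otimes> g | n. n \<in> N}"
proof
  assume "g \<in> {n \<otimes> g | n. n \<in> N}"
  then obtain n where n: "n \<in> N" "g = n \<otimes> g" by blast
  have g: "g \<in> carrier R" and "n \<in> carrier R"
    using regular_elems_carrier[OF assms] N.Icarr[OF n(1)] by auto
  moreover have "g \<otimes> n = g \<otimes> \<one>" using n(2) g calculation(2) m_comm by simp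
  ultimately have "n = \<one>" using regular_elems_cancel[OF assms] by simp
  then show False using n(1) one_notin_N by simp
qed

lemma invertible_ideal_principal:
  assumes "invertible_ideal R I"
  obtains a where "a \<in> regular_elems R" "I = PIdl a"
proof -
  obtain K s where I: "ideal I R" and K: "ideal K R" and s: "s \<in> regular_elems R"
    and IK: "ideal_prod R I K = PIdl s"
    using assms unfolding invertible_ideal_def by blast
  have s_carrier: "s \<in> carrier R" using regular_elems_carrier[OF s] .
  (* s \<notin> N s, so some x y with x \<in> I, y \<in> K is a unit multiple of s; then I = x R *)
  have "\<not> I <#> K \<subseteq> {n \<otimes> s | n. n \<in> N}"
  proof
    assume "I <#> K \<subseteq> {n \<otimes> s | n. n \<in> N}"
    then have "ideal_prod R I K \<subseteq> {n \<otimes> s | n. n \<in> N}"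
      using ideal_prod_eq_genideal[OF I K] genideal_minimal[OF ideal_N_mult[OF s_carrier]] by simp
    then show False
      using IK cgenideal_self[OF s_carrier] regular_notin_N_mult[OF s] by blast
  qed
  then obtain p where "p \<in> I <#> K" and p: "p \<notin> {n \<otimes> s | n. n \<in> N}" by blast
  then obtain x y where x: "x \<in> I" and y: "y \<in> K" and p_eq: "p = x \<otimes> y"
    unfolding set_mult_def by blast
  from p have xy: "x \<otimes> y \<notin> {n \<otimes> s | n. n \<in> N}" unfolding p_eq .
  have xy_carrier: "x \<in> carrier R" "y \<in> carrier R" using ideal.Icarr[OF I x] ideal.Icarr[OF K y] .
  have "x \<otimes> y \<in> PIdl s" using IK ideal_prod.prod[where R=R, OF x y] by simp
  then obtain r where r: "r \<in> carrier R" "x \<otimes> y = r \<otimes> s" unfolding cgenideal_def by blast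
  then have "r \<in> Units R" using xy notin_N_Units by blast
  then have xy_reg: "x \<otimes> y \<in> regular_elems R" and xy_gen: "PIdl (x \<otimes> y) = PIdl s"
    using r(2) regular_elems_mult[OF Units_regular_elems s] cgenideal_Units_mult s_carrier by auto
  have x_reg: "x \<in> regular_elems R" using regular_elems_factor[OF xy_reg xy_carrier] .
  have y_reg: "y \<in> regular_elems R"
    using regular_elems_factor[of y x] xy_reg xy_carrier m_comm by simp
  have "I \<subseteq> PIdl x"
  proof
    fix z assume z: "z \<in> I"
    have "z \<otimes> y \<in> PIdl (x \<otimes> y)" using IK xy_gen ideal_prod.prod[where R=R, OF z y] by simp
    then show "z \<in> PIdl x" by (rule cgenideal_regular_cancel[OF y_reg xy_carrier(1) ideal.Icarr[OF I z]])
  qed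
  moreover have "PIdl x \<subseteq> I" using cgenideal_minimal[OF I x] .
  ultimately show thesis using that x_reg by blast
qed

lemma genideal_principal_generator:
  assumes "S \<subseteq> carrier R" "g \<in> regular_elems R" "Idl S = PIdl g"
  obtains s where "s \<in> S" "s \<in> regular_elems R" "PIdl s = PIdl g"
proof -
  have g: "g \<in> carrier R" using regular_elems_carrier[OF assms(2)] .
  (* Nakayama: the generators cannot all lie in N g *)
  have "\<exists>s\<in>S. s \<notin> {n \<otimes> g | n. n \<in> N}"
  proof (rule ccontr)
    assume "\<not> ?thesis"
    then have "Idl S \<subseteq> {n \<otimes> g | n. n \<in> N}"
      using genideal_minimal[OF ideal_N_mult[OF g]] by blast
    then show False using assms(3) cgenideal_self[OF g] regular_notin_N_mult[OF assms(2)] by blast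
  qed
  then obtain s where s: "s \<in> S" "s \<notin> {n \<otimes> g | n. n \<in> N}" by blast
  have "s \<in> PIdl g" using assms(1,3) s(1) genideal_self by blast
  then obtain t where t: "t \<in> carrier R" "s = t \<otimes> g" unfolding cgenideal_def by blast
  then have "t \<in> Units R" using s(2) notin_N_Units by blast
  then have "s \<in> regular_elems R" "PIdl s = PIdl g"
    using t(2) regular_elems_mult[OF Units_regular_elems assms(2)] cgenideal_Units_mult g by auto
  then show thesis using that s(1) by blast
qed

end

lemma (in ring_hom_cring) image_genideal_subset:
  assumes "G \<subseteq> carrier R"
  shows "h ` (Idl G) \<subseteq> Idl\<^bsub>S\<^esub> (h ` G)"
proof -
  have "G \<subseteq> {r \<in> carrier R. h r \<in> Idl\<^bsub>S\<^esub> (h ` G)}"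
    using assms S.genideal_self[of "h ` G"] by auto
  moreover have "h ` G \<subseteq> carrier S" using assms by auto
  ultimately have "Idl G \<subseteq> {r \<in> carrier R. h r \<in> Idl\<^bsub>S\<^esub> (h ` G)}"
    using R.genideal_minimal[OF ring.ideal_vimage[OF S.genideal_ideal]] by blast
  then show ?thesis by blast
qed

lemma (in ring_hom_cring) ideal_image:
  assumes "ideal I R" "h ` carrier R = carrier S"
  shows "ideal (h ` I) S"
proof (rule S.cring_idealI)
  interpret I: ideal I R by fact
  show "h ` I \<subseteq> carrier S" using I.Icarr by auto
  have "h \<zero> = \<zero>\<^bsub>S\<^esub>" by simp
  then show "\<zero>\<^bsub>S\<^esub> \<in> h ` I" using I.zero_closed by (metis image_eqI)
  fix a b assume "a \<in> h ` I" "b \<in> h ` I"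
  then obtain a' b' where "a' \<in> I" "b' \<in> I" "a = h a'" "b = h b'" by blast
  then show "a \<oplus>\<^bsub>S\<^esub> b \<in> h ` I"
    using I.a_closed I.Icarr by (metis hom_add image_eqI)
next
  interpret I: ideal I R by fact
  fix a x assume "a \<in> h ` I" "x \<in> carrier S"
  then obtain a' x' where "a' \<in> I" "x' \<in> carrier R" "a = h a'" "x = h x'"
    using assms(2) by (metis imageE)
  then show "x \<otimes>\<^bsub>S\<^esub> a \<in> h ` I"
    using I.I_l_closed I.Icarr by (metis hom_mult image_eqI)
qed

lemma (in ring_hom_cring) image_genideal:
  assumes "G \<subseteq> carrier R" "h ` carrier R = carrier S"
  shows "h ` (Idl G) = Idl\<^bsub>S\<^esub> (h ` G)"
proof
  show "h ` (Idl G) \<subseteq> Idl\<^bsub>S\<^esub> (h ` G)" using image_genideal_subset[OF assms(1)] .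
  have "h ` G \<subseteq> h ` (Idl G)" using R.genideal_self[OF assms(1)] by blast
  then show "Idl\<^bsub>S\<^esub> (h ` G) \<subseteq> h ` (Idl G)"
    using S.genideal_minimal ideal_image[OF R.genideal_ideal[OF assms(1)] assms(2)] by blast
qed

lemma (in ring_hom_cring) image_cgenideal:
  assumes "a \<in> carrier R" "h ` carrier R = carrier S"
  shows "h ` (PIdl a) = PIdl\<^bsub>S\<^esub> (h a)"
  using image_genideal[of "{a}"] assms R.cgenideal_eq_genideal S.cgenideal_eq_genideal by simp

lemma RDirProd_simps:
  "x \<otimes>\<^bsub>RDirProd R S\<^esub> y = (fst x \<otimes>\<^bsub>R\<^esub> fst y, snd x \<otimes>\<^bsub>S\<^esub> snd y)"
  "x \<oplus>\<^bsub>RDirProd R S\<^esub> y = (fst x \<oplus>\<^bsub>R\<^esub> fst y, snd x \<oplus>\<^bsub>S\<^esub> snd y)"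
  "\<zero>\<^bsub>RDirProd R S\<^esub> = (\<zero>\<^bsub>R\<^esub>, \<zero>\<^bsub>S\<^esub>)"
  "\<one>\<^bsub>RDirProd R S\<^esub> = (\<one>\<^bsub>R\<^esub>, \<one>\<^bsub>S\<^esub>)"
  by (auto simp: RDirProd_def DirProd_def monoid.defs case_prod_beta)

lemma RDirProd_a_inv:
  assumes "ring R" "ring S" "a \<in> carrier R" "b \<in> carrier S"
  shows "\<ominus>\<^bsub>RDirProd R S\<^esub> (a, b) = (\<ominus>\<^bsub>R\<^esub> a, \<ominus>\<^bsub>S\<^esub> b)"
proof -
  interpret R: ring R by fact
  interpret S: ring S by fact
  interpret P: ring "RDirProd R S" using RDirProd_ring assms(1,2) .
  show ?thesis
    by (rule P.minus_equality) (use assms in \<open>simp_all add: RDirProd_simps RDirProd_carrier R.l_neg S.l_neg\<close>)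
qed

locale amalgamation = ring_hom_cring A B f + J: ideal J B
  for A (structure) and B (structure) and f and J
begin

abbreviation "AJ \<equiv> amalg A B f J"

lemma amalg_simps [simp]:
  "x \<otimes>\<^bsub>AJ\<^esub> y = (fst x \<otimes>\<^bsub>A\<^esub> fst y, snd x \<otimes>\<^bsub>B\<^esub> snd y)"
  "x \<oplus>\<^bsub>AJ\<^esub> y = (fst x \<oplus>\<^bsub>A\<^esub> fst y, snd x \<oplus>\<^bsub>B\<^esub> snd y)"
  "\<zero>\<^bsub>AJ\<^esub> = (\<zero>\<^bsub>A\<^esub>, \<zero>\<^bsub>B\<^esub>)"
  "\<one>\<^bsub>AJ\<^esub> = (\<one>\<^bsub>A\<^esub>, \<one>\<^bsub>B\<^esub>)"
  unfolding amalg_def by (simp_all add: RDirProd_simps)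

lemma mem_carrier_amalg:
  "(a, b) \<in> carrier AJ \<longleftrightarrow> a \<in> carrier A \<and> b \<in> carrier B \<and> b \<ominus>\<^bsub>B\<^esub> f a \<in> J"
proof
  assume "(a, b) \<in> carrier AJ"
  then obtain j where a: "a \<in> carrier A" and j: "j \<in> J" "j \<in> carrier B" and b: "b = f a \<oplus>\<^bsub>B\<^esub> j"
    unfolding amalg_def using J.Icarr by auto
  moreover have "b \<ominus>\<^bsub>B\<^esub> f a = j" unfolding b using hom_closed[OF a] j(2) by algebra
  ultimately show "a \<in> carrier A \<and> b \<in> carrier B \<and> b \<ominus>\<^bsub>B\<^esub> f a \<in> J" by simp
next
  assume ab: "a \<in> carrier A \<and> b \<in> carrier B \<and> b \<ominus>\<^bsub>B\<^esub> f a \<in> J"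
  then have "b = f a \<oplus>\<^bsub>B\<^esub> (b \<ominus>\<^bsub>B\<^esub> f a)" using hom_closed by algebra
  then show "(a, b) \<in> carrier AJ" unfolding amalg_def using ab by auto
qed

lemma carrier_amalg_subset: "carrier AJ \<subseteq> carrier A \<times> carrier B"
  using mem_carrier_amalg by auto

lemma subring_amalg: "subring (carrier AJ) (RDirProd A B)"
proof -
  interpret P: ring "RDirProd A B" using RDirProd_ring R.ring_axioms S.ring_axioms .
  show ?thesis
  proof (rule P.subringI)
    show "carrier AJ \<subseteq> carrier (RDirProd A B)"
      using carrier_amalg_subset by (simp add: RDirProd_carrier)
  next
    show "\<one>\<^bsub>RDirProd A B\<^esub> \<in> carrier AJ"
      using J.zero_closed by (simp add: RDirProd_simps mem_carrier_amalg S.minus_eq S.r_neg)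
  next
    fix z assume "z \<in> carrier AJ"
    then obtain a b where z: "z = (a, b)" "a \<in> carrier A" "b \<in> carrier B" "b \<ominus>\<^bsub>B\<^esub> f a \<in> J"
      using mem_carrier_amalg by (cases z) auto
    have "\<ominus>\<^bsub>B\<^esub> b \<ominus>\<^bsub>B\<^esub> f (\<ominus>\<^bsub>A\<^esub> a) = \<ominus>\<^bsub>B\<^esub> (b \<ominus>\<^bsub>B\<^esub> f a)"
      unfolding hom_a_inv[OF z(2)] using z(3) hom_closed[OF z(2)] by algebra
    then show "\<ominus>\<^bsub>RDirProd A B\<^esub> z \<in> carrier AJ"
      using z J.a_inv_closed
      by (simp add: RDirProd_a_inv R.ring_axioms S.ring_axioms mem_carrier_amalg)
  next
    fix z w assume "z \<in> carrier AJ" "w \<in> carrier AJ"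
    then obtain a b c d where zw: "z = (a, b)" "w = (c, d)"
      and ab: "a \<in> carrier A" "b \<in> carrier B" "b \<ominus>\<^bsub>B\<^esub> f a \<in> J"
      and cd: "c \<in> carrier A" "d \<in> carrier B" "d \<ominus>\<^bsub>B\<^esub> f c \<in> J"
      using mem_carrier_amalg by (cases z, cases w) auto
    have "b \<otimes>\<^bsub>B\<^esub> d \<ominus>\<^bsub>B\<^esub> f (a \<otimes>\<^bsub>A\<^esub> c)
        = b \<otimes>\<^bsub>B\<^esub> (d \<ominus>\<^bsub>B\<^esub> f c) \<oplus>\<^bsub>B\<^esub> f c \<otimes>\<^bsub>B\<^esub> (b \<ominus>\<^bsub>B\<^esub> f a)"
      unfolding hom_mult[OF ab(1) cd(1)] using ab(2) cd(2) hom_closed[OF ab(1)] hom_closed[OF cd(1)] by algebra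
    then show "z \<otimes>\<^bsub>RDirProd A B\<^esub> w \<in> carrier AJ"
      using zw ab cd J.a_closed J.I_l_closed by (simp add: RDirProd_simps mem_carrier_amalg)
    have "b \<oplus>\<^bsub>B\<^esub> d \<ominus>\<^bsub>B\<^esub> f (a \<oplus>\<^bsub>A\<^esub> c) = (b \<ominus>\<^bsub>B\<^esub> f a) \<oplus>\<^bsub>B\<^esub> (d \<ominus>\<^bsub>B\<^esub> f c)"
      unfolding hom_add[OF ab(1) cd(1)] using ab(2) cd(2) hom_closed[OF ab(1)] hom_closed[OF cd(1)] by algebra
    then show "z \<oplus>\<^bsub>RDirProd A B\<^esub> w \<in> carrier AJ"
      using zw ab cd J.a_closed by (simp add: RDirProd_simps mem_carrier_amalg)
  qed
qed

lemma amalg_cring: "cring AJ"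
proof -
  interpret P: ring "RDirProd A B" using RDirProd_ring R.ring_axioms S.ring_axioms .
  have "subcring (carrier AJ) (RDirProd A B)"
    using subring_amalg
    by (rule P.subcringI) (auto simp: RDirProd_simps mem_carrier_amalg R.m_comm S.m_comm)
  then show ?thesis
    using P.subcring_iff[OF subringE(1)[OF subring_amalg]] unfolding amalg_def by simp
qed

lemma diag_mem_amalg: "a \<in> carrier A \<Longrightarrow> (a, f a) \<in> carrier AJ"
  using J.zero_closed by (simp add: mem_carrier_amalg S.minus_eq S.r_neg)

lemma zero_mem_amalg: "j \<in> J \<Longrightarrow> (\<zero>\<^bsub>A\<^esub>, j) \<in> carrier AJ"
  using J.Icarr by (simp add: mem_carrier_amalg S.minus_eq)

sublocale Fst: ring_hom_cring AJ A fst
proof (intro ring_hom_cring.intro ring_hom_cring_axioms.intro ring_hom_memI)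
  show "cring AJ" by (rule amalg_cring)
qed (use carrier_amalg_subset R.is_cring in auto)

sublocale Diag: ring_hom_cring A AJ "\<lambda>a. (a, f a)"
proof (intro ring_hom_cring.intro ring_hom_cring_axioms.intro ring_hom_memI)
  show "cring AJ" by (rule amalg_cring)
qed (use diag_mem_amalg R.is_cring in auto)

lemma fst_image_carrier_amalg: "fst ` carrier AJ = carrier A"
  using carrier_amalg_subset diag_mem_amalg by force

definition amalg_ideal where
  "amalg_ideal I = {z \<in> carrier AJ. fst z \<in> I}"

lemma ideal_amalg_ideal: "ideal I A \<Longrightarrow> ideal (amalg_ideal I) AJ"
  unfolding amalg_ideal_def using Fst.ring.ideal_vimage .

lemma regular_elems_amalgI:
  assumes "(x, y) \<in> carrier AJ" "x \<in> regular_elems A" "y \<in> regular_elems B"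
  shows "(x, y) \<in> regular_elems AJ"
proof (rule Fst.R.regular_elemsI[OF assms(1)])
  fix w assume w: "w \<in> carrier AJ" "(x, y) \<otimes>\<^bsub>AJ\<^esub> w = \<zero>\<^bsub>AJ\<^esub>"
  then have "fst w = \<zero>\<^bsub>A\<^esub>" "snd w = \<zero>\<^bsub>B\<^esub>"
    using R.regular_elemsD[OF assms(2)] S.regular_elemsD[OF assms(3)] carrier_amalg_subset by auto
  then show "w = \<zero>\<^bsub>AJ\<^esub>" by (simp add: prod_eq_iff)
qed

lemma cgenideal_diag_zero_memD:
  assumes a: "a \<in> regular_elems A" and j: "(\<zero>\<^bsub>A\<^esub>, j) \<in> PIdl\<^bsub>AJ\<^esub> (a, f a)"
  shows "j \<in> (\<lambda>j. f a \<otimes>\<^bsub>B\<^esub> j) ` J"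
proof -
  obtain w where w: "w \<in> carrier AJ" "(\<zero>\<^bsub>A\<^esub>, j) = w \<otimes>\<^bsub>AJ\<^esub> (a, f a)"
    using j unfolding cgenideal_def by blast
  have a_carrier: "a \<in> carrier A" using R.regular_elems_carrier[OF a] .
  have w_carrier: "fst w \<in> carrier A" "snd w \<in> carrier B" using w(1) carrier_amalg_subset by auto
  have "a \<otimes>\<^bsub>A\<^esub> fst w = \<zero>\<^bsub>A\<^esub>" using w(2) w_carrier(1) a_carrier R.m_comm by simp
  then have "fst w = \<zero>\<^bsub>A\<^esub>" using R.regular_elemsD[OF a w_carrier(1)] by simp
  then have "(\<zero>\<^bsub>A\<^esub>, snd w) \<in> carrier AJ" using w(1) by (metis prod.collapse)
  then have "snd w \<in> J" using w_carrier(2) by (simp add: mem_carrier_amalg S.minus_eq)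
  moreover have "j = f a \<otimes>\<^bsub>B\<^esub> snd w" using w(2) w_carrier(2) a_carrier S.m_comm by simp
  ultimately show ?thesis by blast
qed

lemma ideal_eq_amalg_ideal_fst_image:
  assumes I: "ideal I AJ" and zero_J: "\<And>j. j \<in> J \<Longrightarrow> (\<zero>\<^bsub>A\<^esub>, j) \<in> I"
  shows "I = amalg_ideal (fst ` I)"
proof
  interpret I: ideal I AJ by (rule I)
  show "I \<subseteq> amalg_ideal (fst ` I)" unfolding amalg_ideal_def using I.Icarr by auto
  show "amalg_ideal (fst ` I) \<subseteq> I"
  proof
    fix z assume "z \<in> amalg_ideal (fst ` I)"
    then obtain a y w where z: "z = (a, y)" "(a, y) \<in> carrier AJ" and w: "(a, w) \<in> I"
      unfolding amalg_ideal_def by (cases z) force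
    have w_carrier: "(a, w) \<in> carrier AJ" using I.Icarr[OF w] .
    have a: "a \<in> carrier A" "y \<in> carrier B" "w \<in> carrier B" "y \<ominus>\<^bsub>B\<^esub> f a \<in> J" "w \<ominus>\<^bsub>B\<^esub> f a \<in> J"
      using z(2) w_carrier by (auto simp: mem_carrier_amalg)
    have "y \<ominus>\<^bsub>B\<^esub> w = (y \<ominus>\<^bsub>B\<^esub> f a) \<ominus>\<^bsub>B\<^esub> (w \<ominus>\<^bsub>B\<^esub> f a)"
      using a(2,3) hom_closed[OF a(1)] by algebra
    then have "y \<ominus>\<^bsub>B\<^esub> w \<in> J" using a(4,5) J.a_closed J.a_inv_closed by (simp add: S.minus_eq)
    then have "(a, w) \<oplus>\<^bsub>AJ\<^esub> (\<zero>\<^bsub>A\<^esub>, y \<ominus>\<^bsub>B\<^esub> w) \<in> I" using w zero_J I.a_closed by blast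
    moreover have "w \<oplus>\<^bsub>B\<^esub> (y \<ominus>\<^bsub>B\<^esub> w) = y" using a(2,3) by algebra
    ultimately show "z \<in> I" using z(1) a(1) by simp
  qed
qed

lemma amalg_ideal_cgenideal:
  assumes a: "a \<in> carrier A" and J_div: "J \<subseteq> (\<lambda>j. f a \<otimes>\<^bsub>B\<^esub> j) ` J"
  shows "amalg_ideal (PIdl\<^bsub>A\<^esub> a) = PIdl\<^bsub>AJ\<^esub> (a, f a)"
proof
  show "PIdl\<^bsub>AJ\<^esub> (a, f a) \<subseteq> amalg_ideal (PIdl\<^bsub>A\<^esub> a)"
  proof
    fix z assume "z \<in> PIdl\<^bsub>AJ\<^esub> (a, f a)"
    then obtain w where w: "w \<in> carrier AJ" "z = w \<otimes>\<^bsub>AJ\<^esub> (a, f a)" unfolding cgenideal_def by blast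
    have "z \<in> carrier AJ" unfolding w(2) using Fst.R.m_closed[OF w(1) diag_mem_amalg[OF a]] .
    moreover have "fst z \<in> PIdl\<^bsub>A\<^esub> a"
      using w carrier_amalg_subset unfolding cgenideal_def by auto
    ultimately show "z \<in> amalg_ideal (PIdl\<^bsub>A\<^esub> a)" unfolding amalg_ideal_def by simp
  qed
  show "amalg_ideal (PIdl\<^bsub>A\<^esub> a) \<subseteq> PIdl\<^bsub>AJ\<^esub> (a, f a)"
  proof
    fix z assume "z \<in> amalg_ideal (PIdl\<^bsub>A\<^esub> a)"
    then obtain t y where z: "z = (t \<otimes>\<^bsub>A\<^esub> a, y)" "(t \<otimes>\<^bsub>A\<^esub> a, y) \<in> carrier AJ" "t \<in> carrier A"
      unfolding amalg_ideal_def cgenideal_def by (cases z) auto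
    then have y: "y \<in> carrier B" "y \<ominus>\<^bsub>B\<^esub> f (t \<otimes>\<^bsub>A\<^esub> a) \<in> J" by (auto simp: mem_carrier_amalg)
    then obtain j where j: "j \<in> J" "y \<ominus>\<^bsub>B\<^esub> f (t \<otimes>\<^bsub>A\<^esub> a) = f a \<otimes>\<^bsub>B\<^esub> j" using J_div by blast
    have j_carrier: "j \<in> carrier B" using J.Icarr[OF j(1)] .
    have w: "(t, f t \<oplus>\<^bsub>B\<^esub> j) \<in> carrier AJ"
      unfolding amalg_def using z(3) j(1) by auto
    have "y = f t \<otimes>\<^bsub>B\<^esub> f a \<oplus>\<^bsub>B\<^esub> f a \<otimes>\<^bsub>B\<^esub> j"
    proof -
      have "y = f (t \<otimes>\<^bsub>A\<^esub> a) \<oplus>\<^bsub>B\<^esub> (y \<ominus>\<^bsub>B\<^esub> f (t \<otimes>\<^bsub>A\<^esub> a))"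
        using y(1) hom_closed[OF R.m_closed[OF z(3) a]] by algebra
      then show ?thesis using j(2) z(3) a by simp
    qed
    also have "\<dots> = (f t \<oplus>\<^bsub>B\<^esub> j) \<otimes>\<^bsub>B\<^esub> f a"
      using hom_closed[OF z(3)] hom_closed[OF a] j_carrier by algebra
    finally have "z = (t, f t \<oplus>\<^bsub>B\<^esub> j) \<otimes>\<^bsub>AJ\<^esub> (a, f a)" using z(1) by simp
    then show "z \<in> PIdl\<^bsub>AJ\<^esub> (a, f a)" unfolding cgenideal_def using w by blast
  qed
qed

end

locale local_amalgamation = amalgamation +
  fixes m
  assumes local_A: "local_ring A" and maximal_m: "maximalideal m A"
    and J_proper: "J \<noteq> carrier B" and J_image: "J \<subseteq> f ` carrier A"
    and f_regular: "f ` regular_elems A = regular_elems B"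
begin

sublocale A_local: local_cring A m
proof (intro local_cring.intro local_cring_axioms.intro)
  show "cring A" by (rule R.is_cring)
  interpret maximalideal m A by (rule maximal_m)
  show "ideal m A" by (rule is_ideal)
  show "\<one>\<^bsub>A\<^esub> \<notin> m" using one_imp_carrier I_notcarr by blast
  show "a \<in> Units A" if "a \<in> carrier A" "a \<notin> m" for a
    using local_ring_notin_maximalideal_Units[OF local_A maximal_m that] .
qed

lemma f_mem_J_imp_mem_m:
  assumes "c \<in> carrier A" "f c \<in> J" shows "c \<in> m"
proof (rule ccontr)
  assume "c \<notin> m"
  then have c: "c \<in> Units A" using A_local.notin_N_Units assms(1) by blast
  then have "f (inv\<^bsub>A\<^esub> c) \<otimes>\<^bsub>B\<^esub> f c \<in> J" using J.I_l_closed assms(2) by simp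
  moreover have "f (inv\<^bsub>A\<^esub> c) \<otimes>\<^bsub>B\<^esub> f c = \<one>\<^bsub>B\<^esub>"
    using c assms(1) by (simp add: hom_mult[symmetric] del: hom_mult)
  ultimately show False using J.one_imp_carrier J_proper by simp
qed

lemma mem_carrier_amalgE:
  assumes "(a, y) \<in> carrier AJ"
  obtains c where "c \<in> carrier A" "c \<in> m" "f c \<in> J" "y = f (a \<oplus>\<^bsub>A\<^esub> c)"
proof -
  have a: "a \<in> carrier A" "y \<in> carrier B" "y \<ominus>\<^bsub>B\<^esub> f a \<in> J"
    using assms mem_carrier_amalg by auto
  then obtain c where c: "c \<in> carrier A" "y \<ominus>\<^bsub>B\<^esub> f a = f c" using J_image by blast
  moreover have "y = f a \<oplus>\<^bsub>B\<^esub> (y \<ominus>\<^bsub>B\<^esub> f a)" using a(2) hom_closed[OF a(1)] by algebra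
  ultimately have "y = f a \<oplus>\<^bsub>B\<^esub> f c" by simp
  then have "y = f (a \<oplus>\<^bsub>A\<^esub> c)" using a(1) c(1) by simp
  moreover have "f c \<in> J" using a(3) c(2) by simp
  ultimately show thesis using that[OF c(1) f_mem_J_imp_mem_m[OF c(1)]] by blast
qed

lemma amalg_Units:
  assumes "(a, y) \<in> carrier AJ" "a \<notin> m" shows "(a, y) \<in> Units AJ"
proof -
  obtain c where c: "c \<in> carrier A" "c \<in> m" "f c \<in> J" and y: "y = f (a \<oplus>\<^bsub>A\<^esub> c)"
    using mem_carrier_amalgE[OF assms(1)] .
  have a: "a \<in> carrier A" using assms(1) mem_carrier_amalg by blast
  define u where "u = a \<oplus>\<^bsub>A\<^esub> c"
  have u: "u \<in> carrier A" unfolding u_def using a c(1) by simp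
  have "u \<notin> m"
  proof
    assume "u \<in> m"
    moreover have "a = u \<oplus>\<^bsub>A\<^esub> \<ominus>\<^bsub>A\<^esub> c" unfolding u_def using a c(1) by algebra
    ultimately show False using assms(2) c(2) A_local.N.a_closed A_local.N.a_inv_closed by metis
  qed
  then have "a \<in> Units A" "u \<in> Units A" using A_local.notin_N_Units a u assms(2) by auto
  then have inv: "inv\<^bsub>A\<^esub> a \<in> carrier A" "inv\<^bsub>A\<^esub> u \<in> carrier A"
    "a \<otimes>\<^bsub>A\<^esub> inv\<^bsub>A\<^esub> a = \<one>\<^bsub>A\<^esub>" "u \<otimes>\<^bsub>A\<^esub> inv\<^bsub>A\<^esub> u = \<one>\<^bsub>A\<^esub>"
    by auto
  have "inv\<^bsub>A\<^esub> u \<ominus>\<^bsub>A\<^esub> inv\<^bsub>A\<^esub> a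
      = inv\<^bsub>A\<^esub> u \<otimes>\<^bsub>A\<^esub> (a \<otimes>\<^bsub>A\<^esub> inv\<^bsub>A\<^esub> a) \<ominus>\<^bsub>A\<^esub> inv\<^bsub>A\<^esub> a \<otimes>\<^bsub>A\<^esub> (u \<otimes>\<^bsub>A\<^esub> inv\<^bsub>A\<^esub> u)"
    using inv by simp
  also have "\<dots> = \<ominus>\<^bsub>A\<^esub> (inv\<^bsub>A\<^esub> u \<otimes>\<^bsub>A\<^esub> inv\<^bsub>A\<^esub> a \<otimes>\<^bsub>A\<^esub> c)"
    using inv(1,2) a c(1) unfolding u_def by algebra
  finally have "inv\<^bsub>A\<^esub> u \<ominus>\<^bsub>A\<^esub> inv\<^bsub>A\<^esub> a = \<ominus>\<^bsub>A\<^esub> (inv\<^bsub>A\<^esub> u \<otimes>\<^bsub>A\<^esub> inv\<^bsub>A\<^esub> a \<otimes>\<^bsub>A\<^esub> c)" .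
  then have "f (inv\<^bsub>A\<^esub> u) \<ominus>\<^bsub>B\<^esub> f (inv\<^bsub>A\<^esub> a) = \<ominus>\<^bsub>B\<^esub> (f (inv\<^bsub>A\<^esub> u \<otimes>\<^bsub>A\<^esub> inv\<^bsub>A\<^esub> a) \<otimes>\<^bsub>B\<^esub> f c)"
    using inv(1,2) c(1) by (metis R.a_inv_closed R.minus_eq R.m_closed S.minus_eq hom_a_inv hom_add hom_mult)
  then have v: "(inv\<^bsub>A\<^esub> a, f (inv\<^bsub>A\<^esub> u)) \<in> carrier AJ"
    using inv(1,2) c(3) J.I_l_closed J.a_inv_closed by (simp add: mem_carrier_amalg)
  have "(a, y) \<otimes>\<^bsub>AJ\<^esub> (inv\<^bsub>A\<^esub> a, f (inv\<^bsub>A\<^esub> u)) = \<one>\<^bsub>AJ\<^esub>"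
    using inv u by (simp add: y flip: u_def hom_mult)
  then show ?thesis using Fst.R.unit_factor[OF _ assms(1) v] Fst.R.Units_one_closed by metis
qed

sublocale AJ_local: local_cring AJ "amalg_ideal m"
proof (intro local_cring.intro local_cring_axioms.intro)
  show "cring AJ" by (rule amalg_cring)
  show "ideal (amalg_ideal m) AJ" using ideal_amalg_ideal[OF A_local.N.is_ideal] .
  show "\<one>\<^bsub>AJ\<^esub> \<notin> amalg_ideal m" using A_local.one_notin_N by (simp add: amalg_ideal_def)
  show "z \<in> Units AJ" if "z \<in> carrier AJ" "z \<notin> amalg_ideal m" for z
    using amalg_Units[of "fst z" "snd z"] that by (simp add: amalg_ideal_def)
qed

lemma regular_elems_amalgD_fst:
  assumes "(x, y) \<in> regular_elems AJ" shows "x \<in> regular_elems A"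
proof -
  have xy: "(x, y) \<in> carrier AJ" using Fst.R.regular_elems_carrier[OF assms] .
  then have x: "x \<in> carrier A" and y: "y \<in> carrier B" using carrier_amalg_subset by auto
  obtain c where c: "c \<in> carrier A" "f c \<in> J" and y_eq: "y = f (x \<oplus>\<^bsub>A\<^esub> c)"
    using mem_carrier_amalgE[OF xy] by blast
  show ?thesis
  proof (rule R.regular_elemsI[OF x])
    fix z assume z: "z \<in> carrier A" "x \<otimes>\<^bsub>A\<^esub> z = \<zero>\<^bsub>A\<^esub>"
    have "(c \<otimes>\<^bsub>A\<^esub> z, \<zero>\<^bsub>B\<^esub>) \<in> carrier AJ"
      using c z(1) J.I_r_closed J.a_inv_closed by (simp add: mem_carrier_amalg S.minus_eq)
    moreover have "x \<otimes>\<^bsub>A\<^esub> (c \<otimes>\<^bsub>A\<^esub> z) = c \<otimes>\<^bsub>A\<^esub> (x \<otimes>\<^bsub>A\<^esub> z)"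
      using x c(1) z(1) by algebra
    ultimately have cz: "c \<otimes>\<^bsub>A\<^esub> z = \<zero>\<^bsub>A\<^esub>"
      using Fst.R.regular_elemsD[OF assms, of "(c \<otimes>\<^bsub>A\<^esub> z, \<zero>\<^bsub>B\<^esub>)"] z(2) c(1) y by simp
    have "(x \<oplus>\<^bsub>A\<^esub> c) \<otimes>\<^bsub>A\<^esub> z = \<zero>\<^bsub>A\<^esub>" using x c(1) z cz by (simp add: R.l_distr)
    then have "y \<otimes>\<^bsub>B\<^esub> f z = \<zero>\<^bsub>B\<^esub>"
      unfolding y_eq using x c(1) z(1) by (metis R.add.m_closed hom_mult hom_zero)
    then show "z = \<zero>\<^bsub>A\<^esub>"
      using Fst.R.regular_elemsD[OF assms diag_mem_amalg[OF z(1)]] z(2) by simp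
  qed
qed

lemma regular_elems_amalgD_snd:
  assumes "(x, y) \<in> regular_elems AJ" shows "y \<in> regular_elems B"
proof -
  have xy: "(x, y) \<in> carrier AJ" using Fst.R.regular_elems_carrier[OF assms] .
  then have x: "x \<in> carrier A" and y: "y \<in> carrier B" using carrier_amalg_subset by auto
  obtain c where c: "c \<in> carrier A" "f c \<in> J" and y_eq: "y = f (x \<oplus>\<^bsub>A\<^esub> c)"
    using mem_carrier_amalgE[OF xy] by blast
  show ?thesis
  proof (rule S.regular_elemsI[OF y])
    fix b assume b: "b \<in> carrier B" "y \<otimes>\<^bsub>B\<^esub> b = \<zero>\<^bsub>B\<^esub>"
    have "(\<zero>\<^bsub>A\<^esub>, b \<otimes>\<^bsub>B\<^esub> f c) \<in> carrier AJ"
      using zero_mem_amalg J.I_l_closed c(2) b(1) by blast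
    moreover have "y \<otimes>\<^bsub>B\<^esub> (b \<otimes>\<^bsub>B\<^esub> f c) = (y \<otimes>\<^bsub>B\<^esub> b) \<otimes>\<^bsub>B\<^esub> f c"
      using y b(1) c(1) by (simp add: S.m_assoc)
    ultimately have bc: "b \<otimes>\<^bsub>B\<^esub> f c = \<zero>\<^bsub>B\<^esub>"
      using Fst.R.regular_elemsD[OF assms, of "(\<zero>\<^bsub>A\<^esub>, b \<otimes>\<^bsub>B\<^esub> f c)"] b c(1) x by simp
    have "f x \<otimes>\<^bsub>B\<^esub> b = y \<otimes>\<^bsub>B\<^esub> b \<ominus>\<^bsub>B\<^esub> b \<otimes>\<^bsub>B\<^esub> f c"
      unfolding y_eq hom_add[OF x c(1)] using b(1) hom_closed[OF x] hom_closed[OF c(1)] by algebra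
    then have "f x \<otimes>\<^bsub>B\<^esub> b = \<zero>\<^bsub>B\<^esub>" using b bc by (simp add: S.minus_eq)
    moreover have "f x \<in> regular_elems B" using f_regular regular_elems_amalgD_fst[OF assms] by blast
    ultimately show "b = \<zero>\<^bsub>B\<^esub>" using S.regular_elemsD b(1) by blast
  qed
qed

lemma J_eq_regular_mult_J:
  assumes J_div: "\<forall>a \<in> m - zero_divisors A. J = (\<lambda>j. f a \<otimes>\<^bsub>B\<^esub> j) ` J"
    and b: "b \<in> regular_elems B"
  shows "J = (\<lambda>j. b \<otimes>\<^bsub>B\<^esub> j) ` J"
proof -
  obtain r where r: "r \<in> regular_elems A" "b = f r" using b f_regular by (metis imageE)
  have r_carrier: "r \<in> carrier A" using R.regular_elems_carrier[OF r(1)] .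
  show ?thesis
  proof (cases "r \<in> m")
    case True
    then show ?thesis using J_div r unfolding regular_elems_def by blast
  next
    case False
    then have "r \<in> Units A" using A_local.notin_N_Units r_carrier by blast
    then have inv: "inv\<^bsub>A\<^esub> r \<in> carrier A" "f r \<otimes>\<^bsub>B\<^esub> f (inv\<^bsub>A\<^esub> r) = \<one>\<^bsub>B\<^esub>"
      using r_carrier by (auto simp: hom_mult[symmetric] simp del: hom_mult)
    show ?thesis
    proof
      show "(\<lambda>j. b \<otimes>\<^bsub>B\<^esub> j) ` J \<subseteq> J" using J.I_l_closed r(2) r_carrier by auto
      show "J \<subseteq> (\<lambda>j. b \<otimes>\<^bsub>B\<^esub> j) ` J"
      proof
        fix j assume j: "j \<in> J"
        have "j = b \<otimes>\<^bsub>B\<^esub> (f (inv\<^bsub>A\<^esub> r) \<otimes>\<^bsub>B\<^esub> j)"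
          using r(2) r_carrier inv J.Icarr[OF j] by (simp add: S.m_assoc[symmetric])
        moreover have "f (inv\<^bsub>A\<^esub> r) \<otimes>\<^bsub>B\<^esub> j \<in> J" using J.I_l_closed j inv(1) by simp
        ultimately show "j \<in> (\<lambda>j. b \<otimes>\<^bsub>B\<^esub> j) ` J" by blast
      qed
    qed
  qed
qed

lemma pruefer_amalgD_pruefer:
  assumes "pruefer_ring AJ" shows "pruefer_ring A"
  unfolding pruefer_ring_def
proof (intro allI impI)
  fix I assume "fin_gen_ideal A I \<and> regular_ideal A I"
  then obtain G r where G: "finite G" "G \<subseteq> carrier A" and I: "I = Idl\<^bsub>A\<^esub> G"
    and r: "r \<in> I" "r \<in> regular_elems A"
    unfolding fin_gen_ideal_def regular_ideal_def by blast
  let ?D = "(\<lambda>a. (a, f a)) ` G"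
  have D: "?D \<subseteq> carrier AJ" using G(2) diag_mem_amalg by blast
  have "(r, f r) \<in> Idl\<^bsub>AJ\<^esub> ?D" using Diag.image_genideal_subset[OF G(2)] r(1) I by blast
  moreover have "(r, f r) \<in> regular_elems AJ"
    using regular_elems_amalgI diag_mem_amalg R.regular_elems_carrier f_regular r(2) by blast
  ultimately have "invertible_ideal AJ (Idl\<^bsub>AJ\<^esub> ?D)"
    using Fst.R.pruefer_ringD[OF assms] G(1) D by blast
  then obtain g where g: "g \<in> regular_elems AJ" "Idl\<^bsub>AJ\<^esub> ?D = PIdl\<^bsub>AJ\<^esub> g"
    by (rule AJ_local.invertible_ideal_principal)
  have "fst ` ?D = G" by force
  then have "I = fst ` (Idl\<^bsub>AJ\<^esub> ?D)" using Fst.image_genideal[OF D fst_image_carrier_amalg] I by simp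
  also have "\<dots> = PIdl\<^bsub>A\<^esub> (fst g)"
    using g Fst.image_cgenideal[OF Fst.R.regular_elems_carrier fst_image_carrier_amalg] by simp
  finally show "invertible_ideal A I"
    using R.cgenideal_regular_invertible regular_elems_amalgD_fst[of "fst g" "snd g"] g(1) by simp
qed

lemma pruefer_amalgD_J_eq:
  assumes "pruefer_ring AJ" and a: "a \<in> m - zero_divisors A"
  shows "J = (\<lambda>j. f a \<otimes>\<^bsub>B\<^esub> j) ` J"
proof
  have a_carrier: "a \<in> carrier A" using a A_local.N.Icarr by blast
  have a_reg: "a \<in> regular_elems A" using a a_carrier unfolding regular_elems_def by blast
  show "(\<lambda>j. f a \<otimes>\<^bsub>B\<^esub> j) ` J \<subseteq> J" using J.I_l_closed a_carrier by auto
  show "J \<subseteq> (\<lambda>j. f a \<otimes>\<^bsub>B\<^esub> j) ` J"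
  proof
    fix j assume j: "j \<in> J"
    let ?G = "{(a, f a), (\<zero>\<^bsub>A\<^esub>, j)}"
    have G: "?G \<subseteq> carrier AJ" using diag_mem_amalg[OF a_carrier] zero_mem_amalg[OF j] by blast
    have a_gen: "(a, f a) \<in> Idl\<^bsub>AJ\<^esub> ?G" and j_gen: "(\<zero>\<^bsub>A\<^esub>, j) \<in> Idl\<^bsub>AJ\<^esub> ?G"
      using Fst.R.genideal_self[OF G] by auto
    have "(a, f a) \<in> regular_elems AJ"
      using regular_elems_amalgI diag_mem_amalg a_carrier f_regular a_reg by blast
    then have "invertible_ideal AJ (Idl\<^bsub>AJ\<^esub> ?G)"
      using Fst.R.pruefer_ringD[OF assms(1) _ G a_gen] by simp
    then obtain g where g: "g \<in> regular_elems AJ" "Idl\<^bsub>AJ\<^esub> ?G = PIdl\<^bsub>AJ\<^esub> g"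
      by (rule AJ_local.invertible_ideal_principal)
    then obtain s where s: "s \<in> ?G" "s \<in> regular_elems AJ" "PIdl\<^bsub>AJ\<^esub> s = PIdl\<^bsub>AJ\<^esub> g"
      using AJ_local.genideal_principal_generator[OF G] by metis
    have "s \<noteq> (\<zero>\<^bsub>A\<^esub>, j)"
      using regular_elems_amalgD_fst s(2) A_local.zero_notin_regular_elems by blast
    then have "(\<zero>\<^bsub>A\<^esub>, j) \<in> PIdl\<^bsub>AJ\<^esub> (a, f a)" using s j_gen g(2) by auto
    then show "j \<in> (\<lambda>j. f a \<otimes>\<^bsub>B\<^esub> j) ` J" using cgenideal_diag_zero_memD[OF a_reg] by blast
  qed
qed

lemma regular_ideal_amalg_zero_J_mem:
  assumes J_div: "\<And>b. b \<in> regular_elems B \<Longrightarrow> J = (\<lambda>j. b \<otimes>\<^bsub>B\<^esub> j) ` J"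
    and I: "ideal I AJ" and z: "(x, y) \<in> I" "(x, y) \<in> regular_elems AJ" and j: "j \<in> J"
  shows "(\<zero>\<^bsub>A\<^esub>, j) \<in> I"
proof -
  have x: "x \<in> carrier A" and y: "y \<in> regular_elems B"
    using regular_elems_amalgD_fst[OF z(2)] regular_elems_amalgD_snd[OF z(2)] R.regular_elems_carrier by auto
  obtain j' where j': "j' \<in> J" "j = y \<otimes>\<^bsub>B\<^esub> j'" using J_div[OF y] j by blast
  have "(\<zero>\<^bsub>A\<^esub>, j') \<otimes>\<^bsub>AJ\<^esub> (x, y) \<in> I"
    using ideal.I_l_closed[OF I z(1) zero_mem_amalg[OF j'(1)]] .
  moreover have "(\<zero>\<^bsub>A\<^esub>, j') \<otimes>\<^bsub>AJ\<^esub> (x, y) = (\<zero>\<^bsub>A\<^esub>, j)"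
    using x j'(2) J.Icarr[OF j'(1)] S.regular_elems_carrier[OF y] S.m_comm by simp
  ultimately show ?thesis by simp
qed

lemma pruefer_amalgI:
  assumes pruefer: "pruefer_ring A"
    and J_div: "\<forall>a \<in> m - zero_divisors A. J = (\<lambda>j. f a \<otimes>\<^bsub>B\<^esub> j) ` J"
  shows "pruefer_ring AJ"
  unfolding pruefer_ring_def
proof (intro allI impI)
  fix I assume "fin_gen_ideal AJ I \<and> regular_ideal AJ I"
  then obtain G z where G: "finite G" "G \<subseteq> carrier AJ" and I_gen: "I = Idl\<^bsub>AJ\<^esub> G"
    and I: "ideal I AJ" and z: "z \<in> I" "z \<in> regular_elems AJ"
    unfolding fin_gen_ideal_def regular_ideal_def by blast
  have fst_I: "fst ` I = Idl\<^bsub>A\<^esub> (fst ` G)"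
    using Fst.image_genideal[OF G(2) fst_image_carrier_amalg] I_gen by simp
  have "ideal (fst ` I) A" using Fst.ideal_image[OF I fst_image_carrier_amalg] .
  moreover have "fst z \<in> fst ` I \<inter> regular_elems A"
    using z regular_elems_amalgD_fst[of "fst z" "snd z"] by simp
  moreover have "fst ` G \<subseteq> carrier A" using G(2) carrier_amalg_subset by auto
  ultimately have "fin_gen_ideal A (fst ` I) \<and> regular_ideal A (fst ` I)"
    unfolding fin_gen_ideal_def regular_ideal_def using fst_I G(1) by blast
  then have "invertible_ideal A (fst ` I)" using pruefer unfolding pruefer_ring_def by blast
  then obtain u where u: "u \<in> regular_elems A" "fst ` I = PIdl\<^bsub>A\<^esub> u"
    by (rule A_local.invertible_ideal_principal)
  have u_carrier: "u \<in> carrier A" using R.regular_elems_carrier[OF u(1)] .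
  have f_u: "f u \<in> regular_elems B" using f_regular u(1) by blast
  have "\<And>j. j \<in> J \<Longrightarrow> (\<zero>\<^bsub>A\<^esub>, j) \<in> I"
    using regular_ideal_amalg_zero_J_mem[OF J_eq_regular_mult_J[OF J_div] I, of "fst z" "snd z"] z by simp
  then have "I = amalg_ideal (PIdl\<^bsub>A\<^esub> u)" using ideal_eq_amalg_ideal_fst_image[OF I] u(2) by simp
  also have "\<dots> = PIdl\<^bsub>AJ\<^esub> (u, f u)"
    using amalg_ideal_cgenideal[OF u_carrier] J_eq_regular_mult_J[OF J_div f_u] by simp
  finally show "invertible_ideal AJ I"
    using Fst.R.cgenideal_regular_invertible regular_elems_amalgI diag_mem_amalg[OF u_carrier] u(1) f_u
    by simp
qed

end

theorem theorem2p2: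
  fixes A :: "('a, 'c) ring_scheme" and B :: "('b, 'd) ring_scheme"
    and f :: "'a \<Rightarrow> 'b" and J :: "'b set" and m :: "'a set"
  assumes "local_ring A" and "maximalideal m A"
    and "cring B"
    and "f \<in> ring_hom A B"
    and "ideal J B" and "J \<noteq> carrier B"
    and "J \<subseteq> jacobson_rad B"
    and "J \<subseteq> f ` carrier A"
    and "f ` regular_elems A = regular_elems B"
  shows "pruefer_ring (amalg A B f J) \<longleftrightarrow>
           pruefer_ring A \<and>
           (\<forall>a \<in> m - zero_divisors A. J = (\<lambda>j. f a \<otimes>\<^bsub>B\<^esub> j) ` J)"
proof -
  have "cring A" using assms(1) unfolding local_ring_def by blast
  with assms have "local_amalgamation A B f J m"
    by (intro local_amalgamation.intro amalgamation.intro ring_hom_cring.intro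
        ring_hom_cring_axioms.intro local_amalgamation_axioms.intro) blast+
  then interpret local_amalgamation A B f J m .
  show ?thesis using pruefer_amalgD_pruefer pruefer_amalgD_J_eq pruefer_amalgI by blast
qed

end
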